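(* Let $c\in\mathbb{N}$ and $I=\mathbb{N}\times[c]$. Then every $\mathrm{Sym}$-invariant lattice $L\subseteq\mathbb{Z}^{(I)}$ has a finite equivariant Graver basis, i.e. there is a finite set $\mathcal{G}\subseteq L$ such that $\mathrm{Sym}(\mathcal{G})=\{\sigma(\mathbf{u})\mid\sigma\in\mathrm{Sym},\mathbf{u}\in\mathcal{G}\}$ is the Graver basis of $L$.
   Context: $\mathbb{N}=\{1,2,\dots\}$, $[c]=\{1,\dots,c\}$. For a set $J$, $\mathbb{Z}^{(J)}$ is the free abelian group with basis $J$, i.e. finitely supported integer vectors $\mathbf{u}=(u_j)_{j\in J}$; a lattice is any subgroup of $\mathbb{Z}^{(J)}$. Define the partial order $\mathbf{u}\sqsubseteq\mathbf{v}$ iff $u_jv_j\ge0$ and $|u_j|\le|v_j|$ for all $j\in J$. The Graver basis of a lattice $L$ is the set of all $\sqsubseteq$-minimal elements of $L\setminus\{\mathbf{0}\}$. $\mathrm{Sym}$ denotes the group of permutations of $\mathbb{N}$ fixing all but finitely many elements. It acts on $\mathbb{Z}^{(\mathbb{N}\times[c])}$ by the linear extension of $\sigma(\mathbf{e}_{i,j})=\mathbf{e}_{\sigma(i),j}$, where $\mathbf{e}_{i,j}$ are the standard basis vectors. A lattice $L$ is $\mathrm{Sym}$-invariant if $\sigma(L)\subseteq L$ for all $\sigma\in\mathrm{Sym}$. *)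

theory Defs
  imports Main
begin

text \<open>Index set I = N x [c] with N = {1,2,...}; integer vectors are functions
  nat \<times> nat \<Rightarrow> int; Z^(I) = finitely supported ones with support inside I.\<close>

definition idx :: "nat \<Rightarrow> (nat \<times> nat) set" where
  "idx c = {(i, j). 1 \<le> i \<and> 1 \<le> j \<and> j \<le> c}"

definition ZI :: "nat \<Rightarrow> (nat \<times> nat \<Rightarrow> int) set" where
  "ZI c = {u. finite {x. u x \<noteq> 0} \<and> {x. u x \<noteq> 0} \<subseteq> idx c}"

definition is_lattice :: "nat \<Rightarrow> (nat \<times> nat \<Rightarrow> int) set \<Rightarrow> bool" where
  "is_lattice c L \<longleftrightarrow> L \<subseteq> ZI c \<and> (\<lambda>_. 0) \<in> L \<and>
     (\<forall>u\<in>L. \<forall>v\<in>L. (\<lambda>x. u x + v x) \<in> L) \<and> (\<forall>u\<in>L. (\<lambda>x. - u x) \<in> L)"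

text \<open>Sym: permutations of N = {1,2,...} fixing all but finitely many elements
  (represented as bijections of nat fixing 0).\<close>
definition Sym :: "(nat \<Rightarrow> nat) set" where
  "Sym = {\<sigma>. bij \<sigma> \<and> \<sigma> 0 = 0 \<and> finite {i. \<sigma> i \<noteq> i}}"

text \<open>Action: linear extension of sigma(e_(i,j)) = e_(sigma i, j), i.e.
  (sigma u)(i,j) = u(sigma^-1 i, j).\<close>
definition perm_act :: "(nat \<Rightarrow> nat) \<Rightarrow> (nat \<times> nat \<Rightarrow> int) \<Rightarrow> (nat \<times> nat \<Rightarrow> int)" where
  "perm_act \<sigma> u = (\<lambda>(i, j). u (inv \<sigma> i, j))"

definition sym_invariant :: "(nat \<times> nat \<Rightarrow> int) set \<Rightarrow> bool" where
  "sym_invariant L \<longleftrightarrow> (\<forall>\<sigma>\<in>Sym. \<forall>u\<in>L. perm_act \<sigma> u \<in> L)"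

definition conformal_le :: "(nat \<times> nat \<Rightarrow> int) \<Rightarrow> (nat \<times> nat \<Rightarrow> int) \<Rightarrow> bool" where
  "conformal_le u v \<longleftrightarrow> (\<forall>x. u x * v x \<ge> 0 \<and> \<bar>u x\<bar> \<le> \<bar>v x\<bar>)"

definition graver :: "(nat \<times> nat \<Rightarrow> int) set \<Rightarrow> (nat \<times> nat \<Rightarrow> int) set" where
  "graver L = {u \<in> L - {\<lambda>_. 0}. \<not> (\<exists>v \<in> L - {\<lambda>_. 0}. conformal_le v u \<and> v \<noteq> u)}"

end

theory Submission
  imports Defs "HOL-Library.Ramsey" "HOL-Library.Sublist" "HOL-Combinatorics.Permutations"
begin

(* A vector u in Z^(N x [c]) is read as the finite word of its rows u(i, -) in Z^c.
   The conformal order on Z^c is almost full (Dickson), hence by Higman's lemma so is the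
   subword embedding of such words, and an embedding of the rows of u into the rows of v is
   realised by some sigma in Sym with sigma u conformally below v. Since Sym permutes the
   Graver basis and its elements are conformally minimal, sigma u below v forces v = sigma u
   for Graver elements u, v; a finite basis of this almost-full relation on the Graver basis
   is therefore a finite set of orbit representatives. *)

section \<open>Almost-full relations\<close>

definition good :: "('a \<Rightarrow> 'a \<Rightarrow> bool) \<Rightarrow> (nat \<Rightarrow> 'a) \<Rightarrow> bool" where
  "good P f \<longleftrightarrow> (\<exists>i j. i < j \<and> P (f i) (f j))"

abbreviation bad :: "('a \<Rightarrow> 'a \<Rightarrow> bool) \<Rightarrow> (nat \<Rightarrow> 'a) \<Rightarrow> bool" where
  "bad P f \<equiv> \<not> good P f"

definition almost_full_on :: "('a \<Rightarrow> 'a \<Rightarrow> bool) \<Rightarrow> 'a set \<Rightarrow> bool" where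
  "almost_full_on P A \<longleftrightarrow> (\<forall>f. (\<forall>i. f i \<in> A) \<longrightarrow> good P f)"

lemma almost_full_onD: "almost_full_on P A \<Longrightarrow> (\<And>i. f i \<in> A) \<Longrightarrow> good P f"
  by (auto simp: almost_full_on_def)

lemma almost_full_on_mono:
  assumes "almost_full_on P A" and "B \<subseteq> A" and "\<And>x y. x \<in> B \<Longrightarrow> y \<in> B \<Longrightarrow> P x y \<Longrightarrow> Q x y"
  shows "almost_full_on Q B"
  using assms unfolding almost_full_on_def good_def by (meson subsetD)

lemma almost_full_on_map:
  assumes "almost_full_on Q B" and "h ` A \<subseteq> B"
  shows "almost_full_on (\<lambda>x y. Q (h x) (h y)) A"
  unfolding almost_full_on_def
proof (intro allI impI)
  fix f :: "nat \<Rightarrow> _" assume "\<forall>i. f i \<in> A"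
  then have "good Q (h \<circ> f)" using assms by (intro almost_full_onD) auto
  then show "good (\<lambda>x y. Q (h x) (h y)) f" by (simp add: good_def)
qed

lemma almost_full_on_eq_finite: "finite A \<Longrightarrow> almost_full_on (=) A"
  unfolding almost_full_on_def good_def
proof (intro allI impI)
  fix f :: "nat \<Rightarrow> 'a" assume "finite A" and "\<forall>i. f i \<in> A"
  then have "\<not> inj f" using finite_subset[of "range f" A] by (auto dest: finite_imageD)
  then obtain i j where "i \<noteq> j" "f i = f j" by (auto simp: inj_def)
  then show "\<exists>i j. i < j \<and> f i = f j" by (metis linorder_neqE)
qed

lemma almost_full_on_le_wellorder: "almost_full_on (\<le>) (UNIV :: 'a :: wellorder set)"
  unfolding almost_full_on_def good_def
proof (intro allI impI)
  fix f :: "nat \<Rightarrow> 'a"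
  obtain i where "f i = (LEAST y. y \<in> range f)" by (metis LeastI rangeE rangeI)
  then have "f i \<le> f (Suc i)" by (simp add: Least_le)
  then show "\<exists>i j. i < j \<and> f i \<le> f j" by blast
qed

text \<open>Colour each pair \<open>i < j\<close> by whether \<open>P (f i) (f j)\<close>; by Ramsey's theorem some subsequence is
  monochromatic, and almost-fullness rules out the colour \<open>False\<close>.\<close>
lemma almost_full_on_imp_homogeneous_subseq:
  assumes "almost_full_on P A" and "\<And>i. f i \<in> A"
  obtains \<phi> :: "nat \<Rightarrow> nat" where "strict_mono \<phi>" and "\<And>i j. i < j \<Longrightarrow> P (f (\<phi> i)) (f (\<phi> j))"
proof -
  define col where "col X = (if P (f (Min X)) (f (Max X)) then 0 else 1 :: nat)" for X
  have "\<forall>x\<in>UNIV. \<forall>y\<in>UNIV. x \<noteq> y \<longrightarrow> col {x, y} < 2" by (simp add: col_def)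
  from Ramsey2[OF infinite_UNIV_nat this] obtain Y t
    where Y: "infinite Y" and t: "\<forall>x\<in>Y. \<forall>y\<in>Y. x \<noteq> y \<longrightarrow> col {x, y} = t"
    by blast
  define \<phi> where "\<phi> = enumerate Y"
  have mono: "strict_mono \<phi>"
    unfolding \<phi>_def strict_mono_def using Y by (simp add: enumerate_mono)
  have col: "col {\<phi> i, \<phi> j} = (if P (f (\<phi> i)) (f (\<phi> j)) then 0 else 1)" if "i < j" for i j
    using strict_monoD[OF mono that] by (simp add: col_def)
  have hom: "col {\<phi> i, \<phi> j} = t" if "i < j" for i j
  proof -
    have "\<phi> i \<in> Y" "\<phi> j \<in> Y" using Y by (simp_all add: \<phi>_def enumerate_in_set)
    moreover have "\<phi> i \<noteq> \<phi> j" using strict_monoD[OF mono that] by simp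
    ultimately show ?thesis using t by blast
  qed
  have "good P (f \<circ> \<phi>)" by (rule almost_full_onD[OF assms(1)]) (simp add: assms(2))
  then obtain i j where ij: "i < j" "P (f (\<phi> i)) (f (\<phi> j))" by (auto simp: good_def)
  have "t = 0" using col[OF ij(1)] hom[OF ij(1)] ij(2) by simp
  then have "P (f (\<phi> i)) (f (\<phi> j))" if "i < j" for i j
    using col[OF that] hom[OF that] by (simp split: if_splits)
  with mono show thesis by (rule that)
qed

lemma almost_full_on_Times:
  assumes "almost_full_on P A" and "almost_full_on Q B"
  shows "almost_full_on (\<lambda>(a, b) (a', b'). P a a' \<and> Q b b') (A \<times> B)"
  unfolding almost_full_on_def
proof (intro allI impI)
  fix f :: "nat \<Rightarrow> _" assume f: "\<forall>i. f i \<in> A \<times> B"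
  obtain \<phi> :: "nat \<Rightarrow> nat"
    where mono: "strict_mono \<phi>" and P: "\<And>i j. i < j \<Longrightarrow> P (fst (f (\<phi> i))) (fst (f (\<phi> j)))"
    using f
    by (auto simp: mem_Times_iff intro: almost_full_on_imp_homogeneous_subseq[OF assms(1), of "fst \<circ> f"])
  obtain i j where "i < j" "Q (snd (f (\<phi> i))) (snd (f (\<phi> j)))"
    using almost_full_onD[OF assms(2), of "snd \<circ> f \<circ> \<phi>"] f by (auto simp: good_def mem_Times_iff)
  moreover have "\<phi> i < \<phi> j" using strict_monoD[OF mono] \<open>i < j\<close> .
  ultimately show "good (\<lambda>(a, b) (a', b'). P a a' \<and> Q b b') f"
    using P[of i j] unfolding good_def by (auto simp: split_beta)
qed

lemma almost_full_on_finite_basis: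
  assumes "almost_full_on P A"
  obtains G where "finite G" and "G \<subseteq> A" and "\<And>v. v \<in> A \<Longrightarrow> \<exists>u\<in>G. P u v"
proof (rule ccontr)
  note basis = that
  assume "\<not> thesis"
  then have fresh_ex: "\<exists>v. v \<in> A \<and> (\<forall>u\<in>G. \<not> P u v)" if "finite G" "G \<subseteq> A" for G
    using basis[OF that] by blast
  define fresh where "fresh G = (SOME v. v \<in> A \<and> (\<forall>u\<in>G. \<not> P u v))" for G
  have fresh: "fresh G \<in> A \<and> (\<forall>u\<in>G. \<not> P u (fresh G))" if "finite G" "G \<subseteq> A" for G
    unfolding fresh_def using fresh_ex[OF that] by (rule someI_ex)
  define F where "F = rec_nat {} (\<lambda>_ G. insert (fresh G) G)"
  have F_Suc: "F (Suc n) = insert (fresh (F n)) (F n)" for n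
    by (simp add: F_def)
  have F: "finite (F n) \<and> F n \<subseteq> A" for n
    by (induction n) (simp_all add: F_def fresh)
  define f where "f n = fresh (F n)" for n
  have earlier: "f i \<in> F j" if "i < j" for i j
    using that by (induction j) (auto simp: F_Suc f_def less_Suc_eq)
  have "good P f"
    using F fresh by (intro almost_full_onD[OF assms]) (simp add: f_def)
  then obtain i j where "i < j" "P (f i) (f j)" by (auto simp: good_def)
  then show False
    using earlier[of i j] F[of j] fresh[of "F j"] by (simp add: f_def)
qed

section \<open>Higman's lemma\<close>

lemma minimal_bad_seq:
  fixes weight :: "'a \<Rightarrow> nat"
  assumes "\<not> almost_full_on P A"
  obtains m where "\<And>i. m i \<in> A" and "bad P m"
    and "\<And>n g. (\<And>i. g i \<in> A) \<Longrightarrow> bad P g \<Longrightarrow> (\<And>i. i < n \<Longrightarrow> g i = m i) \<Longrightarrow>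
           weight (m n) \<le> weight (g n)"
proof -
  define extends_bad where "extends_bad xs x \<longleftrightarrow>
    (\<exists>g. (\<forall>i. g i \<in> A) \<and> bad P g \<and> (\<forall>i<length xs. g i = xs ! i) \<and> g (length xs) = x)" for xs x
  define pre where "pre = rec_nat [] (\<lambda>_ xs. xs @ [arg_min weight (extends_bad xs)])"
  have pre_Suc: "pre (Suc n) = pre n @ [arg_min weight (extends_bad (pre n))]" for n
    by (simp add: pre_def)
  have length_pre: "length (pre n) = n" for n
    by (induction n) (simp_all add: pre_def)
  have pre_extendable: "\<exists>g. (\<forall>i. g i \<in> A) \<and> bad P g \<and> (\<forall>i<n. g i = pre n ! i)" for n
  proof (induction n)
    case 0
    then show ?case using assms by (auto simp: almost_full_on_def)
  next
    case (Suc n)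
    then obtain g where "(\<forall>i. g i \<in> A) \<and> bad P g \<and> (\<forall>i<n. g i = pre n ! i)" by blast
    then have "extends_bad (pre n) (g n)" by (auto simp: extends_bad_def length_pre)
    then have "extends_bad (pre n) (arg_min weight (extends_bad (pre n)))"
      by (rule arg_min_nat_lemma[THEN conjunct1])
    then show ?case
      by (auto simp: extends_bad_def length_pre pre_Suc nth_append less_Suc_eq)
  qed
  define m where "m i = pre (Suc i) ! i" for i
  have pre_nth: "pre n ! i = m i" if "i < n" for n i
    using that by (induction n) (auto simp: m_def pre_Suc nth_append length_pre less_Suc_eq)
  show thesis
  proof
    fix i
    show "m i \<in> A" using pre_extendable[of "Suc i"] pre_nth[of i "Suc i"] by (metis lessI)
  next
    show "bad P m"
    proof
      assume "good P m"
      then obtain i j where ij: "i < j" "P (m i) (m j)" by (auto simp: good_def)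
      obtain g where "bad P g" and g: "\<forall>k<Suc j. g k = pre (Suc j) ! k"
        using pre_extendable by blast
      moreover have "g i = m i" "g j = m j" using g pre_nth \<open>i < j\<close> by simp_all
      ultimately show False using ij unfolding good_def by metis
    qed
  next
    fix n g
    assume "\<And>i. g i \<in> A" "bad P g" "\<And>i. i < n \<Longrightarrow> g i = m i"
    then have "extends_bad (pre n) (g n)" by (auto simp: extends_bad_def length_pre pre_nth)
    then show "weight (m n) \<le> weight (g n)"
      by (simp add: m_def pre_Suc nth_append length_pre arg_min_nat_le)
  qed
qed

text \<open>Nash-Williams' argument: in a bad sequence of words of minimal length, pass to a subsequence
  whose heads form a chain; replacing its words by their tails yields a shorter bad sequence.\<close>
lemma almost_full_on_lists:
  assumes "almost_full_on P A"
  shows "almost_full_on (list_emb P) (lists A)"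
proof (rule ccontr)
  assume "\<not> almost_full_on (list_emb P) (lists A)"
  then obtain m where mA: "\<And>i. m i \<in> lists A" and m_bad: "bad (list_emb P) m"
    and m_min: "\<And>n g. (\<And>i. g i \<in> lists A) \<Longrightarrow> bad (list_emb P) g \<Longrightarrow> (\<And>i. i < n \<Longrightarrow> g i = m i) \<Longrightarrow>
                  length (m n) \<le> length (g n)"
    using minimal_bad_seq[where weight = length] by blast
  have m_emb: "\<not> list_emb P (m i) (m j)" if "i < j" for i j
    using m_bad that by (auto simp: good_def)
  have m_nonempty: "m i \<noteq> []" for i
    using m_emb[of i "Suc i"] by auto
  have hd_in: "hd (m i) \<in> A" for i using mA[of i] m_nonempty[of i] by (cases "m i") auto
  obtain \<phi> :: "nat \<Rightarrow> nat" where \<phi>: "strict_mono \<phi>"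
    and hd_chain: "\<And>i j. i < j \<Longrightarrow> P (hd (m (\<phi> i))) (hd (m (\<phi> j)))"
    using almost_full_on_imp_homogeneous_subseq[OF assms, of "\<lambda>i. hd (m i)"] hd_in by blast
  define g where "g i = (if i < \<phi> 0 then m i else tl (m (\<phi> (i - \<phi> 0))))" for i
  have "g i \<in> lists A" for i using mA by (cases "m i"; cases "m (\<phi> (i - \<phi> 0))") (auto simp: g_def)
  moreover have "length (g (\<phi> 0)) < length (m (\<phi> 0))" using m_nonempty by (simp add: g_def)
  ultimately have "good (list_emb P) g" using m_min[of g "\<phi> 0"] by (force simp: g_def)
  then obtain i j where "i < j" and emb: "list_emb P (g i) (g j)" by (auto simp: good_def)
  have \<phi>_ge: "\<phi> 0 \<le> \<phi> k" for k using \<phi> by (simp add: strict_mono_less_eq)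
  have emb_tl: "list_emb P xs (tl ys) \<Longrightarrow> list_emb P xs ys" for xs ys by (cases ys) auto
  consider "j < \<phi> 0" | "i < \<phi> 0" "\<phi> 0 \<le> j" | "\<phi> 0 \<le> i" by linarith
  then show False
  proof cases
    case 1
    then show False using emb m_emb[OF \<open>i < j\<close>] \<open>i < j\<close> by (simp add: g_def)
  next
    case 2
    then have "list_emb P (m i) (m (\<phi> (j - \<phi> 0)))" using emb emb_tl by (simp add: g_def)
    moreover have "i < \<phi> (j - \<phi> 0)" using 2 \<phi>_ge[of "j - \<phi> 0"] by simp
    ultimately show False using m_emb by blast
  next
    case 3
    define a b where "a = i - \<phi> 0" and "b = j - \<phi> 0"
    have "a < b" using 3 \<open>i < j\<close> by (simp add: a_def b_def)
    have "list_emb P (tl (m (\<phi> a))) (tl (m (\<phi> b)))"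
      using 3 \<open>i < j\<close> emb by (simp add: g_def a_def b_def)
    moreover have "P (hd (m (\<phi> a))) (hd (m (\<phi> b)))" using hd_chain[OF \<open>a < b\<close>] .
    ultimately have "list_emb P (m (\<phi> a)) (m (\<phi> b))"
      using m_nonempty[of "\<phi> a"] m_nonempty[of "\<phi> b"] by (cases "m (\<phi> a)"; cases "m (\<phi> b)") auto
    then show False using m_emb strict_monoD[OF \<phi> \<open>a < b\<close>] by blast
  qed
qed

section \<open>The conformal order\<close>

definition int_conformal_le :: "int \<Rightarrow> int \<Rightarrow> bool" where
  "int_conformal_le a b \<longleftrightarrow> 0 \<le> a * b \<and> \<bar>a\<bar> \<le> \<bar>b\<bar>"

lemma almost_full_on_int_conformal_le: "almost_full_on int_conformal_le UNIV"
proof -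
  have "almost_full_on (\<lambda>(s, n) (s', n'). s = s' \<and> n \<le> n') (UNIV \<times> UNIV :: (bool \<times> nat) set)"
    by (rule almost_full_on_Times[OF almost_full_on_eq_finite almost_full_on_le_wellorder]) simp
  from almost_full_on_map[OF this, of "\<lambda>a. (0 \<le> a, nat \<bar>a\<bar>)" UNIV]
  have "almost_full_on (\<lambda>a b. (0 \<le> a \<longleftrightarrow> 0 \<le> b) \<and> nat \<bar>a\<bar> \<le> nat \<bar>b\<bar>) (UNIV :: int set)"
    by simp
  then show ?thesis
    by (rule almost_full_on_mono) (auto simp: int_conformal_le_def zero_le_mult_iff)
qed

lemma almost_full_on_pointwise:
  assumes "almost_full_on P UNIV" and "P z z" and "finite J"
  shows "almost_full_on (\<lambda>x y. \<forall>j. P (x j) (y j)) {x. \<forall>j. j \<notin> J \<longrightarrow> x j = z}"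
  using assms(3)
proof (induction J rule: finite_induct)
  case empty
  have "{x. \<forall>j. j \<notin> {} \<longrightarrow> x j = z} = {\<lambda>_. z}" by auto
  then show ?case using assms(2) by (auto simp: almost_full_on_def good_def)
next
  case (insert a J)
  let ?S = "\<lambda>J. {x. \<forall>j. j \<notin> J \<longrightarrow> x j = z}"
  have "almost_full_on (\<lambda>(s, x) (s', y). P s s' \<and> (\<forall>j. P (x j) (y j))) (UNIV \<times> ?S J)"
    by (rule almost_full_on_Times[OF assms(1) insert.IH])
  moreover have "(\<lambda>x. (x a, x(a := z))) ` ?S (insert a J) \<subseteq> UNIV \<times> ?S J" by auto
  ultimately have "almost_full_on (\<lambda>x y. (\<lambda>(s, x) (s', y). P s s' \<and> (\<forall>j. P (x j) (y j)))
      (x a, x(a := z)) (y a, y(a := z))) (?S (insert a J))"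
    by (rule almost_full_on_map)
  then show ?case
  proof (rule almost_full_on_mono)
    fix x y
    assume "(\<lambda>(s, x) (s', y). P s s' \<and> (\<forall>j. P (x j) (y j))) (x a, x(a := z)) (y a, y(a := z))"
    then have "P (x a) (y a)" and upd: "\<And>j. P ((x(a := z)) j) ((y(a := z)) j)" by auto
    moreover have "P (x j) (y j)" if "j \<noteq> a" for j using upd[of j] that by simp
    ultimately show "\<forall>j. P (x j) (y j)" by metis
  qed simp
qed

lemma inj_on_extends_to_permutation:
  assumes "finite S" and "inj_on g S"
  obtains \<sigma> where "\<sigma> permutes S \<union> g ` S" and "\<And>k. k \<in> S \<Longrightarrow> \<sigma> k = g k"
proof -
  define T where "T = g ` S"
  have "finite T" and "card T = card S"
    using assms by (simp_all add: T_def card_image)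
  then have "card (T - S) = card (S - T)"
    using assms(1) by (simp add: card_Diff_subset_Int Int_commute)
  then obtain b where b: "bij_betw b (T - S) (S - T)"
    using finite_same_card_bij \<open>finite T\<close> assms(1) by blast
  define \<sigma> where "\<sigma> k = (if k \<in> S then g k else if k \<in> T then b k else k)" for k
  have "bij_betw \<sigma> S T"
    using assms(2) unfolding T_def bij_betw_def \<sigma>_def inj_on_def by auto
  moreover have "bij_betw \<sigma> (T - S) (S - T)"
    using b by (rule bij_betw_cong[THEN iffD1, rotated]) (auto simp: \<sigma>_def)
  ultimately have "bij_betw \<sigma> (S \<union> (T - S)) (T \<union> (S - T))"
    by (rule bij_betw_combine) auto
  then have "bij_betw \<sigma> (S \<union> T) (S \<union> T)" by (simp add: Un_commute)
  then have "\<sigma> permutes S \<union> T" by (rule bij_imp_permutes) (simp add: \<sigma>_def)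
  then show thesis using that by (simp add: T_def \<sigma>_def)
qed

lemma Sym_eq: "Sym = {\<sigma>. permutation \<sigma> \<and> \<sigma> 0 = 0}"
  by (auto simp: Sym_def permutation)

lemma inv_in_Sym: "\<sigma> \<in> Sym \<Longrightarrow> inv \<sigma> \<in> Sym"
  by (simp add: Sym_eq permutation_inverse) (metis permutation_bijective bij_inv_eq_iff)

lemma permutes_in_Sym: "\<sigma> permutes A \<Longrightarrow> finite A \<Longrightarrow> 0 \<notin> A \<Longrightarrow> \<sigma> \<in> Sym"
  by (auto simp: Sym_eq permutes_imp_permutation permutes_not_in)

lemma perm_act_apply [simp]: "perm_act \<sigma> u (i, j) = u (inv \<sigma> i, j)"
  by (simp add: perm_act_def)

lemma perm_act_zero [simp]: "perm_act \<sigma> (\<lambda>_. 0) = (\<lambda>_. 0)"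
  by (auto simp: perm_act_def)

lemma perm_act_inv_perm_act: "bij \<sigma> \<Longrightarrow> perm_act (inv \<sigma>) (perm_act \<sigma> u) = u"
  by (simp add: perm_act_def inv_inv_eq bij_is_inj)

lemma perm_act_perm_act_inv: "bij \<sigma> \<Longrightarrow> perm_act \<sigma> (perm_act (inv \<sigma>) u) = u"
  by (simp add: perm_act_def inv_inv_eq bij_is_surj surj_f_inv_f)

lemma conformal_le_perm_act: "conformal_le u v \<Longrightarrow> conformal_le (perm_act \<sigma> u) (perm_act \<sigma> v)"
  by (simp add: conformal_le_def perm_act_def split_beta)

lemma conformal_le_perm_act_iff:
  assumes "bij \<sigma>"
  shows "conformal_le (perm_act \<sigma> u) v \<longleftrightarrow> (\<forall>i j. int_conformal_le (u (i, j)) (v (\<sigma> i, j)))"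
proof -
  have "conformal_le (perm_act \<sigma> u) v \<longleftrightarrow> (\<forall>k j. int_conformal_le (u (inv \<sigma> k, j)) (v (k, j)))"
    by (auto simp: conformal_le_def int_conformal_le_def mult.commute)
  also have "\<dots> \<longleftrightarrow> (\<forall>i j. int_conformal_le (u (i, j)) (v (\<sigma> i, j)))"
    using assms by (metis bij_inv_eq_iff)
  finally show ?thesis .
qed

lemma list_emb_imp_strict_mono_index:
  assumes "list_emb P xs ys"
  shows "\<exists>h. strict_mono h \<and> (\<forall>i<length xs. h i < length ys \<and> P (xs ! i) (ys ! h i))"
  using assms
proof (induction rule: list_emb.induct)
  case (list_emb_Nil ys)
  have "strict_mono (id :: nat \<Rightarrow> nat)" by (simp add: strict_mono_def)
  then show ?case by auto
next
  case (list_emb_Cons xs ys y)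
  then obtain h where "strict_mono h" "\<forall>i<length xs. h i < length ys \<and> P (xs ! i) (ys ! h i)"
    by blast
  then show ?case by (intro exI[of _ "Suc \<circ> h"]) (simp add: strict_mono_def)
next
  case (list_emb_Cons2 x y xs ys)
  then obtain h where h: "strict_mono h" "\<forall>i<length xs. h i < length ys \<and> P (xs ! i) (ys ! h i)"
    by blast
  define h' where "h' = case_nat 0 (Suc \<circ> h)"
  have "strict_mono h'" using h(1) by (simp add: strict_mono_Suc_iff h'_def split: nat.split)
  moreover have "h' i < length (y # ys) \<and> P ((x # xs) ! i) ((y # ys) ! h' i)"
    if "i < length (x # xs)" for i
    using that h(2) list_emb_Cons2.hyps by (cases i) (simp_all add: h'_def)
  ultimately show ?case by blast
qed

definition row_count :: "(nat \<times> nat \<Rightarrow> int) \<Rightarrow> nat" where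
  "row_count u = Max (insert 0 (fst ` {x. u x \<noteq> 0}))"

definition rows :: "(nat \<times> nat \<Rightarrow> int) \<Rightarrow> (nat \<Rightarrow> int) list" where
  "rows u = map (\<lambda>i j. u (i, j)) [1..<Suc (row_count u)]"

lemma le_row_count: "u \<in> ZI c \<Longrightarrow> u (i, j) \<noteq> 0 \<Longrightarrow> i \<le> row_count u"
  unfolding row_count_def ZI_def by (auto intro!: Max_ge image_eqI[of i fst "(i, j)"])

lemma length_rows [simp]: "length (rows u) = row_count u"
  by (simp add: rows_def)

lemma nth_rows: "k < row_count u \<Longrightarrow> rows u ! k = (\<lambda>j. u (Suc k, j))"
  by (simp add: rows_def del: upt_Suc)

lemma rows_in_lists: "u \<in> ZI c \<Longrightarrow> rows u \<in> lists {x. \<forall>j. j \<notin> {1..c} \<longrightarrow> x j = 0}"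
  by (auto simp: rows_def ZI_def idx_def)

lemma list_emb_rows_imp_conformal_le_perm_act:
  assumes "u \<in> ZI c" and "list_emb (\<lambda>x y. \<forall>j. int_conformal_le (x j) (y j)) (rows u) (rows v)"
  shows "\<exists>\<sigma>\<in>Sym. conformal_le (perm_act \<sigma> u) v"
proof -
  obtain h where "strict_mono h" and h_emb: "\<forall>i<row_count u. h i < row_count v \<and>
      (\<forall>j. int_conformal_le ((rows u ! i) j) ((rows v ! h i) j))"
    using list_emb_imp_strict_mono_index[OF assms(2)] by auto
  have h: "\<forall>j. int_conformal_le (u (Suc i, j)) (v (Suc (h i), j))" if "i < row_count u" for i
    using h_emb that nth_rows[of i u] nth_rows[of "h i" v] by auto
  define S where "S = {1..row_count u}"
  define g where "g k = Suc (h (k - 1))" for k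
  have "inj_on g S"
    by (auto simp: inj_on_def g_def S_def strict_mono_eq[OF \<open>strict_mono h\<close>])
  then obtain \<sigma> where \<sigma>: "\<sigma> permutes S \<union> g ` S" and \<sigma>_S: "\<And>k. k \<in> S \<Longrightarrow> \<sigma> k = g k"
    using inj_on_extends_to_permutation[of S g] by (auto simp: S_def)
  have "\<sigma> \<in> Sym" using \<sigma> by (rule permutes_in_Sym) (auto simp: S_def g_def)
  moreover have "int_conformal_le (u (k, j)) (v (\<sigma> k, j))" for k j
  proof (cases "k \<in> S")
    case True
    then have "k = Suc (k - 1)" and "k - 1 < row_count u" by (auto simp: S_def)
    then show ?thesis using h \<sigma>_S[OF True] by (metis g_def)
  next
    case False
    then have "u (k, j) = 0"
      using le_row_count[OF assms(1), of k j] assms(1) by (auto simp: S_def ZI_def idx_def)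
    then show ?thesis by (simp add: int_conformal_le_def)
  qed
  ultimately show ?thesis using conformal_le_perm_act_iff[OF permutes_bij[OF \<sigma>]] by blast
qed

lemma almost_full_on_Sym_conformal_le:
  "almost_full_on (\<lambda>u v. \<exists>\<sigma>\<in>Sym. conformal_le (perm_act \<sigma> u) v) (ZI c)"
proof -
  let ?R = "\<lambda>x y. \<forall>j. int_conformal_le (x j) (y j)"
  have "almost_full_on (list_emb ?R) (lists {x. \<forall>j. j \<notin> {1..c} \<longrightarrow> x j = 0})"
    by (intro almost_full_on_lists almost_full_on_pointwise almost_full_on_int_conformal_le)
      (simp_all add: int_conformal_le_def)
  then have "almost_full_on (\<lambda>u v. list_emb ?R (rows u) (rows v)) (ZI c)"
    by (rule almost_full_on_map) (use rows_in_lists in blast)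
  then show ?thesis
    by (rule almost_full_on_mono) (auto intro: list_emb_rows_imp_conformal_le_perm_act)
qed

section \<open>Graver bases\<close>

lemma graver_conformal_le_eq: "u \<in> graver L \<Longrightarrow> v \<in> graver L \<Longrightarrow> conformal_le u v \<Longrightarrow> u = v"
  by (auto simp: graver_def)

lemma perm_act_in_graver:
  assumes "sym_invariant L" and "\<sigma> \<in> Sym" and "u \<in> graver L"
  shows "perm_act \<sigma> u \<in> graver L"
proof -
  have bij: "bij \<sigma>" using assms(2) by (simp add: Sym_def)
  have act: "perm_act \<tau> w \<in> L" if "\<tau> \<in> Sym" "w \<in> L" for \<tau> w
    using assms(1) that by (simp add: sym_invariant_def)
  have "perm_act \<sigma> u \<in> L" and "perm_act \<sigma> u \<noteq> (\<lambda>_. 0)"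
    using assms act perm_act_inv_perm_act[OF bij, of u] by (auto simp: graver_def)
  moreover have "w = perm_act \<sigma> u"
    if "w \<in> L" "w \<noteq> (\<lambda>_. 0)" "conformal_le w (perm_act \<sigma> u)" for w
  proof -
    let ?w = "perm_act (inv \<sigma>) w"
    have "?w \<in> L" using act inv_in_Sym assms(2) that(1) by blast
    moreover have "?w \<noteq> (\<lambda>_. 0)" using that(2) perm_act_perm_act_inv[OF bij, of w] by force
    moreover have "conformal_le ?w u"
      using conformal_le_perm_act[OF that(3), of "inv \<sigma>"]
      by (simp add: perm_act_inv_perm_act[OF bij])
    ultimately have "?w = u" using assms(3) by (auto simp: graver_def)
    then show ?thesis using perm_act_perm_act_inv[OF bij, of w] by simp
  qed
  ultimately show ?thesis by (auto simp: graver_def)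
qed

lemma Sym_orbit_eq_graver:
  assumes "sym_invariant L" and "G \<subseteq> graver L"
    and "\<And>v. v \<in> graver L \<Longrightarrow> \<exists>u\<in>G. \<exists>\<sigma>\<in>Sym. conformal_le (perm_act \<sigma> u) v"
  shows "{perm_act \<sigma> u | \<sigma> u. \<sigma> \<in> Sym \<and> u \<in> G} = graver L"
proof
  show "{perm_act \<sigma> u | \<sigma> u. \<sigma> \<in> Sym \<and> u \<in> G} \<subseteq> graver L"
    using assms(2) perm_act_in_graver[OF assms(1)] by blast
  show "graver L \<subseteq> {perm_act \<sigma> u | \<sigma> u. \<sigma> \<in> Sym \<and> u \<in> G}"
  proof
    fix v assume v: "v \<in> graver L"
    then obtain u \<sigma> where "u \<in> G" "\<sigma> \<in> Sym" and le: "conformal_le (perm_act \<sigma> u) v"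
      using assms(3) by blast
    moreover have "perm_act \<sigma> u \<in> graver L"
      using assms(2) perm_act_in_graver[OF assms(1)] calculation by blast
    ultimately show "v \<in> {perm_act \<sigma> u | \<sigma> u. \<sigma> \<in> Sym \<and> u \<in> G}"
      using graver_conformal_le_eq[OF _ v le] by blast
  qed
qed

theorem theorem4p1:
  fixes c :: nat and L :: "(nat \<times> nat \<Rightarrow> int) set"
  assumes "c \<ge> 1" and "is_lattice c L" and "sym_invariant L"
  shows "\<exists>G. finite G \<and> G \<subseteq> L \<and>
           {perm_act \<sigma> u | \<sigma> u. \<sigma> \<in> Sym \<and> u \<in> G} = graver L"
proof -
  have "graver L \<subseteq> ZI c" using assms(2) by (auto simp: is_lattice_def graver_def)
  with almost_full_on_Sym_conformal_le
  have "almost_full_on (\<lambda>u v. \<exists>\<sigma>\<in>Sym. conformal_le (perm_act \<sigma> u) v) (graver L)"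
    by (rule almost_full_on_mono)
  then obtain G where "finite G" and G: "G \<subseteq> graver L"
    and basis: "\<And>v. v \<in> graver L \<Longrightarrow> \<exists>u\<in>G. \<exists>\<sigma>\<in>Sym. conformal_le (perm_act \<sigma> u) v"
    by (rule almost_full_on_finite_basis) blast
  moreover have "G \<subseteq> L" using G by (auto simp: graver_def)
  ultimately show ?thesis
    using Sym_orbit_eq_graver[OF assms(3) G basis] by blast
qed

end
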